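(* Let $\mathcal{A}$ be a finite alphabet, $\Omega=\mathcal{A}^{\mathbb{N}}$, and $\mu$ a Borel probability measure on $\Omega$ (not necessarily shift-invariant). For every recursive reversible coding procedure $Z:\mathcal{A}^*\to\{0,1\}^*$ and every real $q>0$, $$h^q_Z(\Omega)\ge h^q_{AIC}(\Omega).$$
   Context: For $\omega\in\Omega$, $\omega^n$ is the string of its first $n$ symbols. A recursive reversible coding procedure is an injective recursive map $Z:\mathcal{A}^*\to\{0,1\}^*$, and $I_Z(s)=|Z(s)|$. $AIC(s)=\min\{|P|:C(P)=s\}$ for a fixed universal computing machine $C$. For an information function $I\in\{AIC,I_Z\}$, the $q$-entropy is $h^q(\Omega)=\limsup_{n\to\infty}\int_\Omega\frac{I(\omega^n)}{n^q}\,d\mu$; $h^q_{AIC}$ and $h^q_Z$ denote it for $I=AIC$ and $I=I_Z$ respectively. *)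

theory Defs
  imports "HOL-Probability.Probability" "HOL-Library.Countable" "HOL-Library.Nat_Bijection"
begin

datatype recf = Zero | Succ | Proj nat | Comp recf "recf list" | Prim recf recf | Mn recf

inductive eval_recf :: "recf \<Rightarrow> nat list \<Rightarrow> nat \<Rightarrow> bool" where
  zero: "eval_recf Zero xs 0"
| succ: "eval_recf Succ (x # xs) (Suc x)"
| proj: "i < length xs \<Longrightarrow> eval_recf (Proj i) xs (xs ! i)"
| comp: "list_all2 (\<lambda>g y. eval_recf g xs y) gs ys \<Longrightarrow> eval_recf f ys z
           \<Longrightarrow> eval_recf (Comp f gs) xs z"
| prim0: "eval_recf f xs y \<Longrightarrow> eval_recf (Prim f g) (0 # xs) y"
| primS: "eval_recf (Prim f g) (n # xs) y \<Longrightarrow> eval_recf g (n # y # xs) z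
           \<Longrightarrow> eval_recf (Prim f g) (Suc n # xs) z"
| mn: "eval_recf f (n # xs) 0 \<Longrightarrow> (\<forall>m<n. \<exists>y>0. eval_recf f (m # xs) y)
           \<Longrightarrow> eval_recf (Mn f) xs n"

definition enc_str :: "'b::countable list \<Rightarrow> nat" where
  "enc_str xs = list_encode (map to_nat xs)"

definition partial_recursive :: "('b::countable list \<Rightarrow> 'c::countable list option) \<Rightarrow> bool" where
  "partial_recursive F \<longleftrightarrow>
     (\<exists>f. \<forall>xs y. eval_recf f [enc_str xs] y \<longleftrightarrow> (\<exists>ys. F xs = Some ys \<and> y = enc_str ys))"

definition recursive :: "('b::countable list \<Rightarrow> 'c::countable list) \<Rightarrow> bool" where
  "recursive F \<longleftrightarrow> partial_recursive (\<lambda>xs. Some (F xs))"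

definition recursive_reversible_coding :: "('a::countable list \<Rightarrow> bool list) \<Rightarrow> bool" where
  "recursive_reversible_coding Z \<longleftrightarrow> inj Z \<and> recursive Z"

definition universal_machine :: "(bool list \<Rightarrow> 'a::countable list option) \<Rightarrow> bool" where
  "universal_machine C \<longleftrightarrow> partial_recursive C \<and>
     (\<forall>D :: bool list \<Rightarrow> 'a list option. partial_recursive D \<longrightarrow>
        (\<exists>pD. \<forall>p. C (pD @ p) = D p))"

definition AIC :: "(bool list \<Rightarrow> 'a list option) \<Rightarrow> 'a list \<Rightarrow> nat" where
  "AIC C s = (LEAST n. \<exists>P. length P = n \<and> C P = Some s)"

definition I_Z :: "('a list \<Rightarrow> bool list) \<Rightarrow> 'a list \<Rightarrow> nat" where
  "I_Z Z s = length (Z s)"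

definition initial :: "(nat \<Rightarrow> 'a) \<Rightarrow> nat \<Rightarrow> 'a list" where
  "initial \<omega> n = map \<omega> [0..<n]"

definition q_entropy :: "(nat \<Rightarrow> 'a) measure \<Rightarrow> ('a list \<Rightarrow> nat) \<Rightarrow> real \<Rightarrow> ereal" where
  "q_entropy M I q =
     limsup (\<lambda>n. ereal (\<integral>\<omega>. real (I (initial \<omega> n)) / (real n) powr q \<partial>M))"

end

theory Submission
  imports Defs
begin

(* Since Z is injective and recursive, its inverse on range Z is partial recursive: given p,
   search for the least number m that codes a string s with Z s = p. The universal machine runs
   this inverse after a fixed program prefix pD, so pD @ Z s is a program for s, and
   AIC s <= |pD| + I_Z s for every string s. After division by n^q the constant |pD| disappears
   in the limit superior. *)

section \<open>Total functions computed by mu-recursive programs\<close>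

definition computes :: "nat \<Rightarrow> recf \<Rightarrow> (nat list \<Rightarrow> nat) \<Rightarrow> bool" where
  "computes k f F \<longleftrightarrow> (\<forall>xs y. length xs = k \<longrightarrow> (eval_recf f xs y \<longleftrightarrow> y = F xs))"

named_theorems computes_intros

inductive_cases eval_recf_ZeroE: "eval_recf Zero xs y"
inductive_cases eval_recf_SuccE: "eval_recf Succ xs y"
inductive_cases eval_recf_ProjE: "eval_recf (Proj i) xs y"
inductive_cases eval_recf_CompE: "eval_recf (Comp f gs) xs y"
inductive_cases eval_recf_PrimE: "eval_recf (Prim f g) xs y"
inductive_cases eval_recf_MnE: "eval_recf (Mn f) xs y"

lemma computes_cong:
  "computes k f F \<Longrightarrow> (\<And>xs. length xs = k \<Longrightarrow> F xs = H xs) \<Longrightarrow> computes k f H"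
  by (auto simp: computes_def)

lemma computes_Zero [computes_intros]: "computes k Zero (\<lambda>_. 0)"
  by (auto simp: computes_def intro: eval_recf.intros elim: eval_recf_ZeroE)

lemma computes_Succ [computes_intros]: "computes 1 Succ (\<lambda>xs. Suc (xs ! 0))"
  by (auto simp: computes_def length_Suc_conv intro: eval_recf.intros elim: eval_recf_SuccE)

lemma computes_Proj [computes_intros]: "i < k \<Longrightarrow> computes k (Proj i) (\<lambda>xs. xs ! i)"
  by (auto simp: computes_def intro: eval_recf.intros elim: eval_recf_ProjE)

lemma list_all2_eval_recf_iff:
  assumes "list_all2 (computes k) gs Gs" "length xs = k"
  shows "list_all2 (\<lambda>g y. eval_recf g xs y) gs ys \<longleftrightarrow> ys = map (\<lambda>G. G xs) Gs"
  using assms(1)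
proof (induction arbitrary: ys rule: list_all2_induct)
  case (Cons g gs G Gs)
  then show ?case using assms(2) by (cases ys) (auto simp: computes_def)
qed simp

lemma computes_Comp:
  assumes "computes (length gs) f F" "list_all2 (computes k) gs Gs"
  shows "computes k (Comp f gs) (\<lambda>xs. F (map (\<lambda>G. G xs) Gs))"
  unfolding computes_def
proof (intro allI impI)
  fix xs :: "nat list" and y assume xs: "length xs = k"
  have "length (map (\<lambda>G. G xs) Gs) = length gs"
    using assms(2) by (simp add: list_all2_lengthD)
  then have "eval_recf f (map (\<lambda>G. G xs) Gs) y \<longleftrightarrow> y = F (map (\<lambda>G. G xs) Gs)" for y
    using assms(1) by (simp add: computes_def)
  then show "eval_recf (Comp f gs) xs y \<longleftrightarrow> y = F (map (\<lambda>G. G xs) Gs)"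
    using list_all2_eval_recf_iff[OF assms(2) xs]
    by (auto intro: eval_recf.comp elim: eval_recf_CompE)
qed

lemma computes_Comp1 [computes_intros]:
  "computes 1 f F \<Longrightarrow> computes k g G \<Longrightarrow> computes k (Comp f [g]) (\<lambda>xs. F [G xs])"
  using computes_Comp[where gs = "[g]" and Gs = "[G]"] by simp

lemma computes_Comp2 [computes_intros]:
  "computes 2 f F \<Longrightarrow> computes k g G \<Longrightarrow> computes k h H \<Longrightarrow>
    computes k (Comp f [g, h]) (\<lambda>xs. F [G xs, H xs])"
  using computes_Comp[where gs = "[g, h]" and Gs = "[G, H]"] by (simp add: numeral_2_eq_2)

lemma computes_Comp1_partial:
  assumes "computes k g G" "\<And>xs y. length xs = k \<Longrightarrow> eval_recf f [G xs] y \<longleftrightarrow> y = F (G xs)"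
  shows "computes k (Comp f [g]) (\<lambda>xs. F (G xs))"
  unfolding computes_def
proof (intro allI impI)
  fix xs :: "nat list" and y assume xs: "length xs = k"
  have arg: "eval_recf g xs y \<longleftrightarrow> y = G xs" for y
    using assms(1) xs by (simp add: computes_def)
  show "eval_recf (Comp f [g]) xs y \<longleftrightarrow> y = F (G xs)"
  proof
    assume "eval_recf (Comp f [g]) xs y"
    then obtain ys where "list_all2 (\<lambda>g y. eval_recf g xs y) [g] ys" "eval_recf f ys y"
      by (rule eval_recf_CompE)
    then show "y = F (G xs)"
      using arg assms(2)[OF xs] by (auto simp: list_all2_Cons1)
  next
    assume "y = F (G xs)"
    then show "eval_recf (Comp f [g]) xs y"
      using arg assms(2)[OF xs] by (intro eval_recf.comp[where ys = "[G xs]"]) simp_all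
  qed
qed

(* The arity is given by the equation m = Suc k, so that the rule also applies to goals whose
   arity is a numeral. *)
lemma computes_Prim:
  assumes "computes k f F" "computes (Suc (Suc k)) g G" "m = Suc k"
    and "\<And>xs. length xs = k \<Longrightarrow> H (0 # xs) = F xs"
    and "\<And>n xs. length xs = k \<Longrightarrow> H (Suc n # xs) = G (n # H (n # xs) # xs)"
  shows "computes m (Prim f g) H"
  unfolding computes_def
proof (intro allI impI)
  fix xs :: "nat list" and y assume "length xs = m"
  then obtain n ys where xs: "xs = n # ys" and ys: "length ys = k"
    using assms(3) by (auto simp: length_Suc_conv)
  have "eval_recf (Prim f g) (n # ys) y \<longleftrightarrow> y = H (n # ys)" for y
  proof (induction n arbitrary: y)
    case 0
    show ?case using assms(1,4) ys
      by (auto simp: computes_def intro: eval_recf.intros elim: eval_recf_PrimE)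
  next
    case (Suc n)
    show ?case using Suc assms(2,5) ys
      by (auto simp: computes_def intro: eval_recf.intros elim: eval_recf_PrimE)
  qed
  then show "eval_recf (Prim f g) xs y \<longleftrightarrow> y = H xs" by (simp add: xs)
qed

lemma eval_recf_Mn_iff:
  assumes "computes (Suc k) g G" "length xs = k"
  shows "eval_recf (Mn g) xs n \<longleftrightarrow> G (n # xs) = 0 \<and> (\<forall>m<n. G (m # xs) \<noteq> 0)"
  using assms by (auto simp: computes_def intro!: eval_recf.intros elim!: eval_recf_MnE)

lemma computes_Mn:
  assumes "computes (Suc k) g G" "\<And>xs. length xs = k \<Longrightarrow> \<exists>n. G (n # xs) = 0"
  shows "computes k (Mn g) (\<lambda>xs. LEAST n. G (n # xs) = 0)"
  unfolding computes_def
proof (intro allI impI)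
  fix xs :: "nat list" and y assume xs: "length xs = k"
  have "G (y # xs) = 0 \<and> (\<forall>m<y. G (m # xs) \<noteq> 0) \<longleftrightarrow> y = (LEAST n. G (n # xs) = 0)"
  proof
    assume y: "G (y # xs) = 0 \<and> (\<forall>m<y. G (m # xs) \<noteq> 0)"
    show "y = (LEAST n. G (n # xs) = 0)"
      by (rule Least_equality[symmetric]) (use y not_le in blast)+
  next
    assume "y = (LEAST n. G (n # xs) = 0)"
    then show "G (y # xs) = 0 \<and> (\<forall>m<y. G (m # xs) \<noteq> 0)"
      using LeastI_ex[OF assms(2)[OF xs]] not_less_Least by blast
  qed
  then show "eval_recf (Mn g) xs y \<longleftrightarrow> y = (LEAST n. G (n # xs) = 0)"
    by (simp add: eval_recf_Mn_iff[OF assms(1) xs])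
qed

section \<open>Arithmetic, case distinction and the pairing function\<close>

primrec recf_const :: "nat \<Rightarrow> recf" where
  "recf_const 0 = Zero"
| "recf_const (Suc c) = Comp Succ [recf_const c]"

lemma computes_recf_const [computes_intros]: "computes k (recf_const c) (\<lambda>_. c)"
proof (induction c)
  case (Suc c)
  show ?case
    using computes_Comp1[OF computes_Succ Suc] by simp
qed (simp add: computes_Zero)

definition recf_add :: recf where
  "recf_add = Prim (Proj 0) (Comp Succ [Proj 1])"

lemma computes_recf_add [computes_intros]: "computes 2 recf_add (\<lambda>xs. xs ! 0 + xs ! 1)"
  unfolding recf_add_def by (rule computes_Prim[where k = 1]) (rule computes_intros | simp)+

definition recf_pred :: recf where
  "recf_pred = Prim Zero (Proj 0)"

lemma computes_recf_pred [computes_intros]: "computes 1 recf_pred (\<lambda>xs. xs ! 0 - 1)"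
  unfolding recf_pred_def by (rule computes_Prim[where k = 0]) (rule computes_intros | simp)+

definition recf_sub :: recf where
  "recf_sub = Comp (Prim (Proj 0) (Comp recf_pred [Proj 1])) [Proj 1, Proj 0]"

lemma computes_recf_sub [computes_intros]: "computes 2 recf_sub (\<lambda>xs. xs ! 0 - xs ! 1)"
proof -
  have "computes 2 (Prim (Proj 0) (Comp recf_pred [Proj 1])) (\<lambda>xs. xs ! 1 - xs ! 0)"
    by (rule computes_Prim[where k = 1]) (rule computes_intros | simp)+
  then show ?thesis
    unfolding recf_sub_def by (rule computes_cong[OF computes_Comp2]) (rule computes_intros | simp)+
qed

definition recf_mul :: recf where
  "recf_mul = Prim Zero (Comp recf_add [Proj 1, Proj 2])"

lemma computes_recf_mul [computes_intros]: "computes 2 recf_mul (\<lambda>xs. xs ! 0 * xs ! 1)"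
  unfolding recf_mul_def by (rule computes_Prim[where k = 1]) (rule computes_intros | simp)+

definition recf_sign :: recf where
  "recf_sign = Prim Zero (recf_const 1)"

lemma computes_recf_sign [computes_intros]:
  "computes 1 recf_sign (\<lambda>xs. if xs ! 0 = 0 then 0 else 1)"
  unfolding recf_sign_def by (rule computes_Prim[where k = 0]) (rule computes_intros | simp)+

definition recf_is_zero :: recf where
  "recf_is_zero = Prim (recf_const 1) Zero"

lemma computes_recf_is_zero [computes_intros]:
  "computes 1 recf_is_zero (\<lambda>xs. if xs ! 0 = 0 then 1 else 0)"
  unfolding recf_is_zero_def by (rule computes_Prim[where k = 0]) (rule computes_intros | simp)+

definition recf_eq :: recf where
  "recf_eq = Comp recf_is_zero [Comp recf_add [recf_sub, Comp recf_sub [Proj 1, Proj 0]]]"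

lemma computes_recf_eq [computes_intros]:
  "computes 2 recf_eq (\<lambda>xs. if xs ! 0 = xs ! 1 then 1 else 0)"
  unfolding recf_eq_def by (rule computes_cong, (rule computes_intros | simp)+)

definition recf_triangle :: recf where
  "recf_triangle = Prim Zero (Comp recf_add [Proj 1, Comp Succ [Proj 0]])"

lemma computes_recf_triangle [computes_intros]: "computes 1 recf_triangle (\<lambda>xs. triangle (xs ! 0))"
  unfolding recf_triangle_def by (rule computes_Prim[where k = 0]) (rule computes_intros | simp)+

lemma triangle_mono: "a \<le> b \<Longrightarrow> triangle a \<le> triangle b"
  by (induction b) (auto simp: le_Suc_eq)

lemma prod_decode_triangle_eq:
  "z = triangle (fst (prod_decode z) + snd (prod_decode z)) + fst (prod_decode z)"
proof -
  obtain x y where xy: "prod_decode z = (x, y)"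
    by fastforce
  show ?thesis
    using prod_decode_inverse[of z] by (simp add: xy prod_encode_def)
qed

lemma Least_triangle_prod_decode:
  "(LEAST t. z \<le> triangle t + t) = fst (prod_decode z) + snd (prod_decode z)"
proof (rule Least_equality)
  show "z \<le> triangle (fst (prod_decode z) + snd (prod_decode z)) + (fst (prod_decode z) + snd (prod_decode z))"
    using prod_decode_triangle_eq[of z] by linarith
next
  fix t assume "z \<le> triangle t + t"
  then have "triangle (fst (prod_decode z) + snd (prod_decode z)) < triangle (Suc t)"
    using prod_decode_triangle_eq[of z] unfolding triangle_Suc by linarith
  then show "fst (prod_decode z) + snd (prod_decode z) \<le> t"
    by (meson leD not_less_eq_eq triangle_mono)
qed

lemma fst_prod_decode_eq:
  "z - triangle (fst (prod_decode z) + snd (prod_decode z)) = fst (prod_decode z)"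
  using prod_decode_triangle_eq[of z] by linarith

definition recf_prod_decode_sum :: recf where
  "recf_prod_decode_sum = Mn (Comp recf_sub [Comp Succ [Proj 1], Comp recf_triangle [Comp Succ [Proj 0]]])"

lemma computes_recf_prod_decode_sum [computes_intros]:
  "computes 1 recf_prod_decode_sum (\<lambda>xs. fst (prod_decode (xs ! 0)) + snd (prod_decode (xs ! 0)))"
proof -
  have "computes (Suc 1) (Comp recf_sub [Comp Succ [Proj 1], Comp recf_triangle [Comp Succ [Proj 0]]])
      (\<lambda>ys. Suc (ys ! 1) - triangle (Suc (ys ! 0)))"
    by (rule computes_cong, (rule computes_intros | simp)+)
  then show ?thesis
    unfolding recf_prod_decode_sum_def
    by (rule computes_cong[OF computes_Mn]) (simp_all add: Least_triangle_prod_decode, metis le_add2)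
qed

definition recf_fst :: recf where
  "recf_fst = Comp recf_sub [Proj 0, Comp recf_triangle [recf_prod_decode_sum]]"

lemma computes_recf_fst [computes_intros]: "computes 1 recf_fst (\<lambda>xs. fst (prod_decode (xs ! 0)))"
  unfolding recf_fst_def
  by (rule computes_cong, (rule computes_intros | simp)+)
    (simp add: fst_prod_decode_eq)

definition recf_snd :: recf where
  "recf_snd = Comp recf_sub [recf_prod_decode_sum, recf_fst]"

lemma computes_recf_snd [computes_intros]: "computes 1 recf_snd (\<lambda>xs. snd (prod_decode (xs ! 0)))"
  unfolding recf_snd_def by (rule computes_cong, (rule computes_intros | simp)+)

definition recf_cond :: "recf \<Rightarrow> recf \<Rightarrow> recf \<Rightarrow> recf" where
  "recf_cond b f g =
     Comp recf_add [Comp recf_mul [Comp recf_sign [b], f], Comp recf_mul [Comp recf_is_zero [b], g]]"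

lemma computes_recf_cond [computes_intros]:
  "computes k b B \<Longrightarrow> computes k f F \<Longrightarrow> computes k g G \<Longrightarrow>
    computes k (recf_cond b f g) (\<lambda>xs. if B xs = 0 then G xs else F xs)"
  unfolding recf_cond_def by (rule computes_cong, (rule computes_intros | assumption)+) simp

primrec recf_mem :: "nat list \<Rightarrow> recf" where
  "recf_mem [] = Zero"
| "recf_mem (s # ss) = recf_cond (Comp recf_eq [Proj 0, recf_const s]) (recf_const 1) (recf_mem ss)"

lemma computes_recf_mem [computes_intros]:
  "computes 1 (recf_mem ss) (\<lambda>xs. if xs ! 0 \<in> set ss then 1 else 0)"
proof (induction ss)
  case Nil
  show ?case by (simp add: computes_Zero)
next
  case (Cons s ss)
  show ?case
    unfolding recf_mem.simps by (rule computes_cong, (rule computes_intros Cons.IH | simp)+)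
qed

section \<open>Codes of strings over a finite alphabet\<close>

(* Since list_encode (x # xs) = Suc (prod_encode (x, list_encode xs)), strip_head S deletes the
   first symbol of a code if it lies in S and is stuck otherwise. As length (list_decode m) <= m,
   m iterations starting from m reach the code 0 of [] iff all symbols of list_decode m lie in S. *)
definition strip_head :: "nat set \<Rightarrow> nat \<Rightarrow> nat" where
  "strip_head S c =
     (if c = 0 then 0 else if fst (prod_decode (c - 1)) \<in> S then snd (prod_decode (c - 1)) else c)"

definition recf_strip_head :: "nat list \<Rightarrow> recf" where
  "recf_strip_head ss =
     recf_cond (Proj 0)
       (recf_cond (Comp (recf_mem ss) [Comp recf_fst [recf_pred]]) (Comp recf_snd [recf_pred]) (Proj 0))
       Zero"

lemma computes_recf_strip_head [computes_intros]:
  "computes 1 (recf_strip_head ss) (\<lambda>xs. strip_head (set ss) (xs ! 0))"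
  unfolding recf_strip_head_def
  by (rule computes_cong, (rule computes_intros | simp)+) (simp add: strip_head_def)

lemma funpow_strip_head_list_encode_eq_0_iff:
  "(strip_head S ^^ n) (list_encode xs) = 0 \<longleftrightarrow> set xs \<subseteq> S \<and> length xs \<le> n"
proof (induction xs arbitrary: n)
  case Nil
  have "(strip_head S ^^ n) 0 = 0"
    by (induction n) (simp_all add: strip_head_def)
  then show ?case by simp
next
  case (Cons x xs)
  show ?case
  proof (cases "x \<in> S")
    case True
    then have "strip_head S (list_encode (x # xs)) = list_encode xs"
      by (simp add: strip_head_def)
    then show ?thesis
      using True Cons.IH by (cases n) (simp_all add: funpow_Suc_right del: funpow.simps)
  next
    case False
    then have "strip_head S (list_encode (x # xs)) = list_encode (x # xs)"
      by (simp add: strip_head_def)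
    then have "(strip_head S ^^ n) (list_encode (x # xs)) = list_encode (x # xs)"
      by (induction n) simp_all
    then show ?thesis
      using False by simp
  qed
qed

lemma length_le_list_encode: "length xs \<le> list_encode xs"
  by (induction xs) (auto intro: le_trans[OF _ le_prod_encode_2])

lemma funpow_strip_head_eq_0_iff: "(strip_head S ^^ m) m = 0 \<longleftrightarrow> set (list_decode m) \<subseteq> S"
  using funpow_strip_head_list_encode_eq_0_iff[where n = m and xs = "list_decode m"]
    length_le_list_encode[of "list_decode m"]
  by simp

definition recf_decodes_into :: "nat list \<Rightarrow> recf" where
  "recf_decodes_into ss =
     Comp recf_is_zero [Comp (Prim (Proj 0) (Comp (recf_strip_head ss) [Proj 1])) [Proj 0, Proj 0]]"

lemma computes_recf_decodes_into [computes_intros]: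
  "computes 1 (recf_decodes_into ss) (\<lambda>xs. if set (list_decode (xs ! 0)) \<subseteq> set ss then 1 else 0)"
proof -
  have "computes 2 (Prim (Proj 0) (Comp (recf_strip_head ss) [Proj 1]))
      (\<lambda>xs. (strip_head (set ss) ^^ (xs ! 0)) (xs ! 1))"
    by (rule computes_Prim[where k = 1]) (rule computes_intros | simp)+
  then show ?thesis
    unfolding recf_decodes_into_def
    by (rule computes_cong[OF computes_Comp1[OF computes_recf_is_zero computes_Comp2]])
      (rule computes_intros | simp add: funpow_strip_head_eq_0_iff)+
qed

definition dec_str :: "nat \<Rightarrow> 'a::countable list" where
  "dec_str m = map from_nat (list_decode m)"

lemma dec_str_enc_str [simp]: "dec_str (enc_str s) = s"
  by (simp add: dec_str_def enc_str_def comp_def)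

lemma enc_str_eq_iff [simp]: "enc_str s = enc_str t \<longleftrightarrow> s = t"
  by (metis dec_str_enc_str)

lemma enc_str_dec_str:
  assumes "set (list_decode m) \<subseteq> range (to_nat :: 'a::countable \<Rightarrow> nat)"
  shows "enc_str (dec_str m :: 'a list) = m"
proof -
  have "map (to_nat \<circ> (from_nat :: nat \<Rightarrow> 'a)) (list_decode m) = list_decode m"
    using assms by (intro map_idI) (auto simp: from_nat_def f_inv_into_f)
  then show ?thesis
    by (simp add: enc_str_def dec_str_def)
qed

lemma mem_range_enc_str_iff:
  "m \<in> range (enc_str :: 'a::countable list \<Rightarrow> nat) \<longleftrightarrow>
    set (list_decode m) \<subseteq> range (to_nat :: 'a \<Rightarrow> nat)"
proof
  assume "m \<in> range (enc_str :: 'a list \<Rightarrow> nat)"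
  then show "set (list_decode m) \<subseteq> range (to_nat :: 'a \<Rightarrow> nat)"
    by (auto simp: enc_str_def)
next
  assume "set (list_decode m) \<subseteq> range (to_nat :: 'a \<Rightarrow> nat)"
  then show "m \<in> range (enc_str :: 'a list \<Rightarrow> nat)"
    by (metis enc_str_dec_str rangeI)
qed

lemma computable_mem_range_enc_str:
  obtains r where "computes 1 r (\<lambda>xs. if xs ! 0 \<in> range (enc_str :: 'a::finite list \<Rightarrow> nat) then 1 else 0)"
proof -
  obtain ss where "set ss = range (to_nat :: 'a \<Rightarrow> nat)"
    using finite_list[of "range (to_nat :: 'a \<Rightarrow> nat)"] by auto
  then have "computes 1 (recf_decodes_into ss)
      (\<lambda>xs. if xs ! 0 \<in> range (enc_str :: 'a list \<Rightarrow> nat) then 1 else 0)"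
    by (intro computes_cong[OF computes_recf_decodes_into]) (simp add: mem_range_enc_str_iff)
  then show ?thesis
    by (rule that)
qed

section \<open>Inverting a recursive injection\<close>

(* The program for Z is specified only on codes of strings and may diverge elsewhere; it is
   therefore run on the code 0 of the empty string instead of a non-code. *)
lemma computable_recursive_on_clamped_codes:
  fixes Z :: "'a::finite list \<Rightarrow> 'b::countable list"
  assumes "recursive Z"
  obtains r where "computes 1 r
    (\<lambda>xs. enc_str (Z (dec_str (if xs ! 0 \<in> range (enc_str :: 'a list \<Rightarrow> nat) then xs ! 0 else 0))))"
proof -
  let ?codes = "range (enc_str :: 'a list \<Rightarrow> nat)"
  let ?clamp = "\<lambda>m. if m \<in> ?codes then m else 0"
  obtain f where f: "\<And>s y. eval_recf f [enc_str s] y \<longleftrightarrow> y = enc_str (Z s)"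
    using assms unfolding recursive_def partial_recursive_def by auto
  obtain r_code where "computes 1 r_code (\<lambda>xs. if xs ! 0 \<in> ?codes then 1 else 0)"
    using computable_mem_range_enc_str by blast
  then have clamp: "computes 1 (recf_cond r_code (Proj 0) Zero) (\<lambda>xs. ?clamp (xs ! 0))"
    by (rule computes_cong[OF computes_recf_cond]) (auto intro: computes_intros)
  have "enc_str ([] :: 'a list) = 0"
    by (simp add: enc_str_def)
  then have clamp_code: "\<exists>s :: 'a list. ?clamp m = enc_str s" for m
    by (metis rangeE)
  have "computes 1 (Comp f [recf_cond r_code (Proj 0) Zero]) (\<lambda>xs. enc_str (Z (dec_str (?clamp (xs ! 0)))))"
  proof (rule computes_Comp1_partial[OF clamp, where F = "\<lambda>c. enc_str (Z (dec_str c))"])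
    fix xs :: "nat list" and y
    obtain s :: "'a list" where "?clamp (xs ! 0) = enc_str s"
      using clamp_code by blast
    then show "eval_recf f [?clamp (xs ! 0)] y \<longleftrightarrow> y = enc_str (Z (dec_str (?clamp (xs ! 0))))"
      by (simp only: f dec_str_enc_str)
  qed
  then show ?thesis
    by (rule that)
qed

lemma partial_recursive_inv:
  fixes Z :: "'a::finite list \<Rightarrow> 'b::countable list"
  assumes "inj Z" "recursive Z"
  shows "partial_recursive (\<lambda>p. if p \<in> range Z then Some (inv Z p) else None)"
proof -
  let ?codes = "range (enc_str :: 'a list \<Rightarrow> nat)"
  obtain r_code where r_code: "computes 1 r_code (\<lambda>xs. if xs ! 0 \<in> ?codes then 1 else 0)"
    using computable_mem_range_enc_str by blast
  obtain r_Z where r_Z: "computes 1 r_Z (\<lambda>xs. enc_str (Z (dec_str (if xs ! 0 \<in> ?codes then xs ! 0 else 0))))"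
    using computable_recursive_on_clamped_codes[OF assms(2)] by blast
  define g where "g = Comp recf_is_zero
      [Comp recf_mul [Comp r_code [Proj 0], Comp recf_eq [Comp r_Z [Proj 0], Proj 1]]]"
  have search: "computes (Suc 1) g
      (\<lambda>xs. if xs ! 0 \<in> ?codes \<and> enc_str (Z (dec_str (xs ! 0))) = xs ! 1 then 0 else 1)"
    unfolding g_def by (rule computes_cong, (rule computes_intros r_code r_Z | simp)+)
  have zero_iff: "m \<in> ?codes \<and> Z (dec_str m) = p \<longleftrightarrow> p \<in> range Z \<and> m = enc_str (inv Z p)"
    for m p
    using assms(1) by (auto simp: inv_f_f)
  show ?thesis
    unfolding partial_recursive_def
  proof (intro exI[of _ "Mn g"] allI)
    fix p :: "'b list" and y
    show "eval_recf (Mn g) [enc_str p] y \<longleftrightarrow>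
        (\<exists>s. (if p \<in> range Z then Some (inv Z p) else None) = Some s \<and> y = enc_str s)"
      by (subst eval_recf_Mn_iff[OF search]) (auto simp: zero_iff)
  qed
qed

lemma AIC_le_I_Z_plus_const:
  fixes C :: "bool list \<Rightarrow> 'a::finite list option" and Z :: "'a list \<Rightarrow> bool list"
  assumes "universal_machine C" "recursive_reversible_coding Z"
  obtains c where "\<And>s. AIC C s \<le> c + I_Z Z s"
proof -
  have "partial_recursive (\<lambda>p. if p \<in> range Z then Some (inv Z p) else None)"
    using assms(2) partial_recursive_inv unfolding recursive_reversible_coding_def by blast
  then obtain pD where pD: "\<And>p. C (pD @ p) = (if p \<in> range Z then Some (inv Z p) else None)"
    using assms(1) unfolding universal_machine_def by blast
  have "AIC C s \<le> length pD + I_Z Z s" for s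
  proof -
    have "C (pD @ Z s) = Some s"
      using pD[of "Z s"] assms(2) by (simp add: recursive_reversible_coding_def)
    then show ?thesis
      unfolding AIC_def I_Z_def by (metis (mono_tags) Least_le length_append)
  qed
  then show ?thesis
    using that by blast
qed

section \<open>Comparison of q-entropies\<close>

lemma initial_eq_iff: "initial \<omega> n = xs \<longleftrightarrow> length xs = n \<and> (\<forall>i<n. \<omega> i = xs ! i)"
  unfolding initial_def by (auto intro: nth_equalityI)

lemma measurable_initial:
  fixes M :: "(nat \<Rightarrow> 'a::{countable, discrete_topology}) measure"
  assumes "sets M = sets borel"
  shows "(\<lambda>\<omega>. initial \<omega> n) \<in> M \<rightarrow>\<^sub>M count_space UNIV"
  unfolding measurable_count_space_eq2_countable
proof (intro conjI ballI)
  fix xs :: "'a list"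
  have space: "space M = UNIV"
    using sets_eq_imp_space_eq[OF assms] by simp
  have coordinate: "{\<omega> \<in> space M. \<omega> i = a} \<in> sets M" for i a
  proof -
    have "(\<lambda>\<omega>::nat \<Rightarrow> 'a. \<omega> i) -` {a} \<inter> space borel \<in> sets borel"
      by (rule measurable_sets[OF measurable_product_coordinates borel_open])
        (rule discrete_topology_class.open_discrete)
    then show ?thesis
      by (simp add: assms space vimage_def)
  qed
  have preimage: "(\<lambda>\<omega>. initial \<omega> n) -` {xs} \<inter> space M =
      {\<omega> \<in> space M. length xs = n \<and> (\<forall>i\<in>{..<n}. \<omega> i = xs ! i)}"
    by (rule set_eqI) (auto simp: initial_eq_iff)
  show "(\<lambda>\<omega>. initial \<omega> n) -` {xs} \<inter> space M \<in> sets M"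
    unfolding preimage using coordinate by (intro sets.sets_Collect_conj sets.sets_Collect_finite_All) auto
qed simp

lemma integrable_initial:
  fixes M :: "(nat \<Rightarrow> 'a::{finite, discrete_topology}) measure" and g :: "'a list \<Rightarrow> real"
  assumes "finite_measure M" "sets M = sets borel"
  shows "integrable M (\<lambda>\<omega>. g (initial \<omega> n))"
proof -
  interpret finite_measure M by fact
  define L where "L = {xs :: 'a list. length xs = n}"
  have "finite L"
    using finite_lists_length_eq[of "UNIV :: 'a set" n] by (simp add: L_def)
  moreover have "initial \<omega> n \<in> L" for \<omega>
    by (simp add: L_def initial_def)
  ultimately have "AE \<omega> in M. norm (g (initial \<omega> n)) \<le> Max ((\<lambda>xs. norm (g xs)) ` L)"
    by (intro AE_I2 Max_ge) auto
  then show ?thesis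
    by (rule integrable_const_bound) (rule measurable_compose[OF measurable_initial[OF assms(2)]], simp)
qed

lemma limsup_const_div_powr:
  assumes "q > 0"
  shows "limsup (\<lambda>n. ereal (c / real n powr q)) = 0"
proof -
  have "(\<lambda>n. c * real n powr (- q)) \<longlonglongrightarrow> c * 0"
    by (intro tendsto_mult tendsto_const tendsto_neg_powr filterlim_real_sequentially) (use assms in auto)
  then have "(\<lambda>n. ereal (c / real n powr q)) \<longlonglongrightarrow> ereal 0"
    by (intro tendsto_ereal) (simp add: powr_minus divide_inverse)
  then show ?thesis
    by (simp add: lim_imp_Limsup zero_ereal_def)
qed

lemma q_entropy_le_of_le_plus_const:
  fixes M :: "(nat \<Rightarrow> 'a::{finite, discrete_topology}) measure" and I J :: "'a list \<Rightarrow> nat"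
  assumes "prob_space M" "sets M = sets borel" "q > 0" "\<And>s. I s \<le> c + J s"
  shows "q_entropy M I q \<le> q_entropy M J q"
proof -
  interpret prob_space M by fact
  define a where "a n = (\<integral>\<omega>. real (J (initial \<omega> n)) / real n powr q \<partial>M)" for n
  define b where "b n = (\<integral>\<omega>. real (I (initial \<omega> n)) / real n powr q \<partial>M)" for n
  have integrable: "integrable M (\<lambda>\<omega>. real (K (initial \<omega> n)) / real n powr q)"
    for K :: "'a list \<Rightarrow> nat" and n
    using integrable_initial[OF finite_measure_axioms assms(2)] .
  have le: "real (I s) \<le> real (J s) + real c" for s
    using assms(4)[of s] by linarith
  have "b n \<le> (\<integral>\<omega>. real (J (initial \<omega> n)) / real n powr q + c / real n powr q \<partial>M)" for n
    unfolding b_def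
    using le by (intro integral_mono integrable Bochner_Integration.integrable_add integrable_const)
      (auto simp: add_divide_distrib[symmetric] intro!: divide_right_mono)
  also have "\<dots> n = a n + c / real n powr q" for n
    unfolding a_def by (simp add: integrable prob_space)
  finally have "b n \<le> a n + c / real n powr q" for n .
  then have "limsup (\<lambda>n. ereal (b n)) \<le> limsup (\<lambda>n. ereal (a n) + ereal (c / real n powr q))"
    by (intro Limsup_mono) auto
  also have "\<dots> \<le> limsup (\<lambda>n. ereal (a n)) + limsup (\<lambda>n. ereal (c / real n powr q))"
    by (rule ereal_limsup_add_mono)
  finally show ?thesis
    unfolding q_entropy_def a_def b_def limsup_const_div_powr[OF assms(3)] by simp
qed

theorem theorem5p2:
  fixes M :: "(nat \<Rightarrow> 'a::{finite, discrete_topology}) measure"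
    and C :: "bool list \<Rightarrow> 'a list option"
    and Z :: "'a list \<Rightarrow> bool list"
    and q :: real
  assumes "prob_space M"
    and "sets M = sets borel"
    and "universal_machine C"
    and "recursive_reversible_coding Z"
    and "q > 0"
  shows "q_entropy M (I_Z Z) q \<ge> q_entropy M (AIC C) q"
proof -
  obtain c where "\<And>s. AIC C s \<le> c + I_Z Z s"
    using AIC_le_I_Z_plus_const[OF assms(3,4)] by blast
  then show ?thesis
    using q_entropy_le_of_le_plus_const[OF assms(1,2,5)] by blast
qed

end
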